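(* Let $D=[a_1,b_1]\times[a_2,b_2]\subset\mathbb R^2$ and let $\psi\in C(D\times\mathbb R^3)$ satisfy $\psi(s,y)=\psi(s,y+m)$ for all $m\in\mathbb Z^3$ and $(s,y)\in D\times\mathbb R^3$. Let $Y:[a_2,b_2]\to\mathbb R^3$ be a $C^1$ function such that for every $m\in\mathbb Z^3$ with $m\ne0$: (1) for all sufficiently small $\delta>0$, the set $\{s_2\in[a_2,b_2]:|m\cdot Y'(s_2)|\le\delta\}$ is contained in a finite union of intervals (their number may depend on $m$ and $\delta$), and (2) the sum of the lengths of these intervals tends to $0$ as $\delta\to0$. Then $$\lim_{\varepsilon\to0^+}\int_D\psi\Big(s,\frac{Y(s_2)}{\varepsilon}\Big)\,ds=\int_D\int_{[0,1]^3}\psi(s,y)\,dy\,ds,\qquad s=(s_1,s_2).$$ *)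

theory Defs
  imports "HOL-Analysis.Analysis"
begin

end

theory Submission
  imports Defs
begin

(* Approximate psi uniformly on D x R^3 by a trigonometric polynomial sum_m c_m(s) e(m.y) with
   continuous coefficients: by periodicity psi factors continuously through the compact image of
   D x [0,1]^3 in D x C^3 under y |-> (e(y_1), e(y_2), e(y_3)), where Stone-Weierstrass applies.
   The zero mode integrates to the cube average. For a mode m <> 0, integrating out s_1 leaves
   an oscillatory integral int G(s_2) e(m.Y(s_2)/eps) ds_2 with phase derivative 2 pi m.Y'/eps.
   The set where |m.Y'| <= delta has small total length; on the rest the phase is non-stationary,
   and on pieces of length about eps one may freeze G and linearize the phase, so the integral
   tends to 0. *)

section \<open>Oscillatory integrals with non-stationary phase\<close>

lemma norm_cis_diff_le: "norm (cis a - cis b) \<le> \<bar>a - b\<bar>"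
proof -
  have "(norm (cis (a - b) - 1))\<^sup>2 = (cos (a - b) - 1)\<^sup>2 + (sin (a - b))\<^sup>2"
    by (simp add: cmod_power2)
  also have "\<dots> = 4 * (sin ((a - b) / 2))\<^sup>2"
  proof -
    have "cos (a - b) = cos (2 * ((a - b) / 2))"
      by (rule arg_cong[where f = cos]) simp
    also have "\<dots> = 1 - 2 * (sin ((a - b) / 2))\<^sup>2"
      by (rule cos_double_sin)
    finally show ?thesis
      using sin_cos_squared_add[of "a - b"] by (simp add: power2_eq_square algebra_simps)
  qed
  also have "\<dots> \<le> 4 * ((a - b) / 2)\<^sup>2"
    using abs_sin_x_le_abs_x[of "(a - b) / 2"] abs_le_square_iff by fastforce
  also have "\<dots> = \<bar>a - b\<bar>\<^sup>2"
    by (simp add: power2_eq_square)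
  finally have "norm (cis (a - b) - 1) \<le> \<bar>a - b\<bar>"
    by (meson abs_ge_zero power2_le_imp_le)
  moreover have "cis a - cis b = cis b * (cis (a - b) - 1)"
    by (simp add: right_diff_distrib cis_mult)
  ultimately show ?thesis
    by (simp add: norm_mult)
qed

lemma norm_integral_cis_affine_le:
  fixes u v \<omega> \<epsilon> \<alpha> :: real
  assumes "u \<le> v" "\<omega> \<noteq> 0" "\<epsilon> > 0"
  shows "norm (integral {u..v} (\<lambda>t. cis ((\<alpha> + \<omega> * (t - u)) / \<epsilon>))) \<le> 2 * \<epsilon> / \<bar>\<omega>\<bar>"
proof -
  define F where "F t = - \<i> * (\<epsilon> / \<omega>) * cis ((\<alpha> + \<omega> * (t - u)) / \<epsilon>)" for t
  have "(F has_vector_derivative cis ((\<alpha> + \<omega> * (t - u)) / \<epsilon>)) (at t within {u..v})" for t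
  proof -
    have "((\<lambda>t. (\<alpha> + \<omega> * (t - u)) / \<epsilon>) has_derivative (\<lambda>x. x * (\<omega> / \<epsilon>))) (at t within {u..v})"
      using assms by (auto intro!: derivative_eq_intros simp: field_simps)
    from has_derivative_cis[OF this] show ?thesis
      unfolding F_def has_vector_derivative_def using assms
      by (auto intro!: derivative_eq_intros simp: field_simps scaleR_conv_of_real)
  qed
  then have "integral {u..v} (\<lambda>t. cis ((\<alpha> + \<omega> * (t - u)) / \<epsilon>)) = F v - F u"
    using assms(1) by (intro integral_unique fundamental_theorem_of_calculus) auto
  also have "norm (F v - F u) \<le> norm (F v) + norm (F u)"
    by (rule norm_triangle_ineq4)
  also have "\<dots> = 2 * \<epsilon> / \<bar>\<omega>\<bar>"
    using assms by (simp add: F_def norm_mult norm_divide)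
  finally show ?thesis .
qed

lemma linearization_error_le:
  fixes \<phi> \<phi>' :: "real \<Rightarrow> real"
  assumes "u \<le> t" "t \<le> v"
    and der: "\<And>x. x \<in> {u..v} \<Longrightarrow> (\<phi> has_real_derivative \<phi>' x) (at x within {u..v})"
    and bd: "\<And>x. x \<in> {u..v} \<Longrightarrow> \<bar>\<phi>' x - \<phi>' u\<bar> \<le> \<rho>"
  shows "\<bar>\<phi> t - \<phi> u - \<phi>' u * (t - u)\<bar> \<le> \<rho> * (t - u)"
proof -
  have "norm (\<phi> t - \<phi> u - \<phi>' u * (t - u)) \<le> norm (t - u) * \<rho>"
  proof (rule differentiable_bound_linearization[where S = "{u..v}" and f' = "\<lambda>x. (*) (\<phi>' x)"])
    show "u + s *\<^sub>R (t - u) \<in> {u..v}" if "s \<in> {0..1}" for s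
      using that assms(1,2) mult_left_le_one_le[of "t - u" s] by auto
    show "(\<phi> has_derivative (*) (\<phi>' x)) (at x within {u..v})" if "x \<in> {u..v}" for x
      using der[OF that] by (simp add: has_field_derivative_def)
    show "onorm ((*) (\<phi>' x) - (*) (\<phi>' u)) \<le> \<rho>" if "x \<in> {u..v}" for x
    proof -
      have "(*) (\<phi>' x) - (*) (\<phi>' u) = (*) (\<phi>' x - \<phi>' u)"
        by (simp add: fun_eq_iff left_diff_distrib)
      then show ?thesis
        using onorm_scaleR[OF bounded_linear_ident[where 'a = real], of "\<phi>' x - \<phi>' u"]
          onorm_id[where 'a = real] bd[OF that] by simp
    qed
  qed (use assms in auto)
  then show ?thesis
    using assms by (simp add: mult.commute)
qed

text \<open>On a short interval where the phase is not stationary, freeze the amplitude and linearize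
  the phase at the left endpoint; the frozen integral is small by the exact computation above.\<close>

lemma norm_integral_oscillatory_piece_le:
  fixes G :: "real \<Rightarrow> complex" and \<phi> \<phi>' :: "real \<Rightarrow> real"
  assumes uv: "u \<le> v" "v - u \<le> h" and \<epsilon>: "\<epsilon> > 0"
    and \<delta>: "\<delta> > 0" "\<delta> \<le> \<bar>\<phi>' u\<bar>"
    and contG: "continuous_on {u..v} G"
    and der: "\<And>x. x \<in> {u..v} \<Longrightarrow> (\<phi> has_real_derivative \<phi>' x) (at x within {u..v})"
    and G_bound: "\<And>x. x \<in> {u..v} \<Longrightarrow> norm (G x) \<le> M"
    and G_osc: "\<And>x. x \<in> {u..v} \<Longrightarrow> norm (G x - G u) \<le> r"
    and \<phi>'_osc: "\<And>x. x \<in> {u..v} \<Longrightarrow> \<bar>\<phi>' x - \<phi>' u\<bar> \<le> \<rho>"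
  shows "norm (integral {u..v} (\<lambda>t. G t * cis (\<phi> t / \<epsilon>)))
           \<le> 2 * M * \<epsilon> / \<delta> + h * (r + M * \<rho> * h / \<epsilon>)"
proof -
  have "0 \<le> M" "0 \<le> r" "0 \<le> \<rho>"
    using G_bound[of u] G_osc[of u] \<phi>'_osc[of u] uv(1) by (auto intro: order_trans[OF norm_ge_zero])
  define f where "f t = G t * cis (\<phi> t / \<epsilon>)" for t
  define g where "g t = G u * cis ((\<phi> u + \<phi>' u * (t - u)) / \<epsilon>)" for t
  have "continuous_on {u..v} \<phi>"
    using der by (rule DERIV_continuous_on)
  then have f_int: "f integrable_on {u..v}"
    unfolding f_def using \<epsilon> by (intro integrable_continuous_interval continuous_intros contG) auto
  have g_int: "g integrable_on {u..v}"
    unfolding g_def using \<epsilon> by (intro integrable_continuous_interval continuous_intros) auto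
  have "norm (integral {u..v} g)
      = norm (G u) * norm (integral {u..v} (\<lambda>t. cis ((\<phi> u + \<phi>' u * (t - u)) / \<epsilon>)))"
    by (simp add: g_def[abs_def] norm_mult)
  also have "\<dots> \<le> M * (2 * \<epsilon> / \<bar>\<phi>' u\<bar>)"
    using norm_integral_cis_affine_le[OF uv(1) _ \<epsilon>, of "\<phi>' u" "\<phi> u"] G_bound[of u] uv(1) \<delta> \<open>0 \<le> M\<close>
    by (intro mult_mono) auto
  also have "\<dots> \<le> M * (2 * \<epsilon> / \<delta>)"
    using \<delta> \<epsilon> \<open>0 \<le> M\<close> by (intro mult_left_mono divide_left_mono) auto
  finally have frozen: "norm (integral {u..v} g) \<le> 2 * M * \<epsilon> / \<delta>"
    by (simp add: algebra_simps)
  have "norm (f t - g t) \<le> r + M * \<rho> * h / \<epsilon>" if t: "t \<in> {u..v}" for t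
  proof -
    have "norm (cis (\<phi> t / \<epsilon>) - cis ((\<phi> u + \<phi>' u * (t - u)) / \<epsilon>))
        \<le> \<bar>\<phi> t / \<epsilon> - (\<phi> u + \<phi>' u * (t - u)) / \<epsilon>\<bar>"
      by (rule norm_cis_diff_le)
    also have "\<dots> = \<bar>\<phi> t - \<phi> u - \<phi>' u * (t - u)\<bar> / \<epsilon>"
      using \<epsilon> by (simp add: diff_divide_distrib[symmetric] abs_divide algebra_simps)
    also have "\<dots> \<le> \<rho> * h / \<epsilon>"
      using linearization_error_le[of u t v \<phi> \<phi>' \<rho>] der \<phi>'_osc t uv \<epsilon> \<open>0 \<le> \<rho>\<close>
      by (intro divide_right_mono order_trans[OF _ mult_left_mono[of "t - u" h \<rho>]]) auto
    finally have "norm (G u) * norm (cis (\<phi> t / \<epsilon>) - cis ((\<phi> u + \<phi>' u * (t - u)) / \<epsilon>))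
        \<le> M * (\<rho> * h / \<epsilon>)"
      using G_bound[of u] uv \<open>0 \<le> M\<close> by (intro mult_mono) auto
    moreover have "f t - g t = (G t - G u) * cis (\<phi> t / \<epsilon>)
        + G u * (cis (\<phi> t / \<epsilon>) - cis ((\<phi> u + \<phi>' u * (t - u)) / \<epsilon>))"
      by (simp add: f_def g_def algebra_simps)
    then have "norm (f t - g t) \<le> norm (G t - G u)
        + norm (G u) * norm (cis (\<phi> t / \<epsilon>) - cis ((\<phi> u + \<phi>' u * (t - u)) / \<epsilon>))"
      by (metis norm_cis mult.right_neutral norm_mult norm_triangle_ineq)
    ultimately show ?thesis
      using G_osc[OF t] by simp
  qed
  then have "norm (integral {u..v} (\<lambda>t. f t - g t)) \<le> (r + M * \<rho> * h / \<epsilon>) * measure lborel {u..v}"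
    using \<open>0 \<le> M\<close> \<open>0 \<le> r\<close> \<open>0 \<le> \<rho>\<close> \<epsilon> uv
    by (intro integrable_bound[where a = u and b = v, unfolded cbox_interval] integrable_diff f_int g_int)
      auto
  also have "\<dots> \<le> (r + M * \<rho> * h / \<epsilon>) * h"
    using uv \<open>0 \<le> M\<close> \<open>0 \<le> r\<close> \<open>0 \<le> \<rho>\<close> \<epsilon> by (intro mult_left_mono) auto
  finally have "norm (integral {u..v} f - integral {u..v} g) \<le> h * (r + M * \<rho> * h / \<epsilon>)"
    by (simp add: integral_diff[OF f_int g_int] mult.commute)
  then show ?thesis
    using frozen norm_triangle_ineq2[of "integral {u..v} f" "integral {u..v} g"]
    unfolding f_def by linarith
qed

lemma card_grid_points_in_interval_le:
  fixes a c d h :: real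
  assumes "h > 0" "c \<le> d"
  shows "real (card {k. k < n \<and> c \<le> a + real k * h \<and> a + real k * h \<le> d}) \<le> (d - c) / h + 1"
proof (cases "{k. k < n \<and> c \<le> a + real k * h \<and> a + real k * h \<le> d} = {}")
  case True
  have "0 \<le> (d - c) / h"
    using assms by simp
  then show ?thesis
    unfolding True by simp
next
  case False
  define S where "S = {k. k < n \<and> c \<le> a + real k * h \<and> a + real k * h \<le> d}"
  have "finite S" "S \<noteq> {}"
    using False by (auto simp: S_def)
  then have "Min S \<in> S" "Max S \<in> S" "S \<subseteq> {Min S..Max S}"
    by auto
  then have "real (card S) \<le> real (Max S) - real (Min S) + 1"
    using card_mono[of "{Min S..Max S}" S] by (auto simp: of_nat_diff)
  moreover have "(real (Max S) - real (Min S)) * h \<le> d - c"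
    using \<open>Min S \<in> S\<close> \<open>Max S \<in> S\<close> by (auto simp: S_def algebra_simps)
  ultimately have "real (card S) * h \<le> d - c + h"
    using assms mult_right_mono[of "real (card S)" "real (Max S) - real (Min S) + 1" h]
    by (simp add: algebra_simps)
  then show ?thesis
    using assms unfolding S_def[symmetric] by (simp add: field_simps)
qed

lemma card_grid_points_in_union_le:
  fixes a h :: real and c d :: "nat \<Rightarrow> real"
  assumes "h > 0" "\<And>i. i < N \<Longrightarrow> c i \<le> d i"
  shows "h * real (card {k. k < n \<and> a + real k * h \<in> (\<Union>i<N. {c i..d i})}) \<le> (\<Sum>i<N. d i - c i) + N * h"
proof -
  have "{k. k < n \<and> a + real k * h \<in> (\<Union>i<N. {c i..d i})}
      = (\<Union>i<N. {k. k < n \<and> c i \<le> a + real k * h \<and> a + real k * h \<le> d i})"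
    by auto
  then have "card {k. k < n \<and> a + real k * h \<in> (\<Union>i<N. {c i..d i})}
      \<le> (\<Sum>i<N. card {k. k < n \<and> c i \<le> a + real k * h \<and> a + real k * h \<le> d i})"
    by (simp add: card_UN_le)
  then have "real (card {k. k < n \<and> a + real k * h \<in> (\<Union>i<N. {c i..d i})})
      \<le> (\<Sum>i<N. real (card {k. k < n \<and> c i \<le> a + real k * h \<and> a + real k * h \<le> d i}))"
    by (simp flip: of_nat_sum)
  also have "\<dots> \<le> (\<Sum>i<N. (d i - c i) / h + 1)"
    using assms by (intro sum_mono card_grid_points_in_interval_le) auto
  also have "\<dots> = ((\<Sum>i<N. d i - c i) + N * h) / h"
    using \<open>h > 0\<close> by (simp add: sum.distrib sum_divide_distrib add_divide_distrib)
  finally show ?thesis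
    using \<open>h > 0\<close> by (simp add: field_simps)
qed

lemma integral_uniform_subdivision:
  fixes f :: "real \<Rightarrow> 'a::banach"
  assumes "h \<ge> 0" "f integrable_on {a..a + real n * h}"
  shows "integral {a..a + real n * h} f = (\<Sum>k<n. integral {a + real k * h..a + real (Suc k) * h} f)"
  using assms
proof (induction n)
  case 0
  then show ?case by simp
next
  case (Suc n)
  have "integral {a..a + real n * h} f + integral {a + real n * h..a + real (Suc n) * h} f
      = integral {a..a + real (Suc n) * h} f"
    using Suc.prems by (intro Henstock_Kurzweil_Integration.integral_combine) (auto simp: algebra_simps)
  moreover have "f integrable_on {a..a + real n * h}"
    using Suc.prems by (intro integrable_on_subinterval[OF Suc.prems(2)]) (auto simp: algebra_simps)
  ultimately show ?case
    using Suc by simp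
qed

text \<open>Pieces whose left endpoint lies in one of the
  intervals covering the near-stationary set are estimated trivially; there are at most
  \<open>(d i - c i) / h + 1\<close> of them per interval. All other pieces are non-stationary.\<close>

lemma norm_integral_oscillatory_subdivision_le:
  fixes G :: "real \<Rightarrow> complex" and \<phi> \<phi>' :: "real \<Rightarrow> real" and c d :: "nat \<Rightarrow> real"
  assumes "a < b" "n > 0" and h_def: "h = (b - a) / n" and \<epsilon>: "\<epsilon> > 0" and \<delta>: "\<delta> > 0"
    and contG: "continuous_on {a..b} G"
    and der: "\<And>x. x \<in> {a..b} \<Longrightarrow> (\<phi> has_real_derivative \<phi>' x) (at x within {a..b})"
    and G_bound: "\<And>x. x \<in> {a..b} \<Longrightarrow> norm (G x) \<le> M"
    and G_osc: "\<And>x y. x \<in> {a..b} \<Longrightarrow> y \<in> {a..b} \<Longrightarrow> \<bar>x - y\<bar> \<le> h \<Longrightarrow> norm (G x - G y) \<le> r"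
    and \<phi>'_osc: "\<And>x y. x \<in> {a..b} \<Longrightarrow> y \<in> {a..b} \<Longrightarrow> \<bar>x - y\<bar> \<le> h \<Longrightarrow> \<bar>\<phi>' x - \<phi>' y\<bar> \<le> \<rho>"
    and cd: "\<And>i. i < N \<Longrightarrow> c i \<le> d i"
    and cover: "{t \<in> {a..b}. \<bar>\<phi>' t\<bar> < \<delta>} \<subseteq> (\<Union>i<N. {c i..d i})"
  shows "norm (integral {a..b} (\<lambda>t. G t * cis (\<phi> t / \<epsilon>)))
     \<le> real n * (2 * M * \<epsilon> / \<delta> + h * (r + M * \<rho> * h / \<epsilon>)) + M * ((\<Sum>i<N. d i - c i) + N * h)"
proof -
  define f where "f t = G t * cis (\<phi> t / \<epsilon>)" for t
  define t where "t k = a + real k * h" for k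
  define B where "B = 2 * M * \<epsilon> / \<delta> + h * (r + M * \<rho> * h / \<epsilon>)"
  define Bad where "Bad = {k. k < n \<and> \<bar>\<phi>' (t k)\<bar> < \<delta>}"
  have "h > 0"
    using assms by (simp add: h_def)
  have "0 \<le> M" "0 \<le> r" "0 \<le> \<rho>"
    using G_bound[of a] G_osc[of a a] \<phi>'_osc[of a a] \<open>a < b\<close> \<open>h > 0\<close>
    by (auto intro: order_trans[OF norm_ge_zero])
  then have "B \<ge> 0"
    using \<open>h > 0\<close> \<epsilon> \<delta> by (simp add: B_def)
  have "continuous_on {a..b} \<phi>"
    using der by (rule DERIV_continuous_on)
  then have f_cont: "continuous_on {a..b} f"
    unfolding f_def using \<epsilon> by (intro continuous_intros contG) auto
  have t: "a \<le> t k" "t (Suc k) \<le> b" "t (Suc k) = t k + h" if "k < n" for k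
  proof -
    have "real (Suc k) * h \<le> real n * h"
      using that \<open>h > 0\<close> by (intro mult_right_mono) auto
    moreover have "real n * h = b - a"
      using \<open>n > 0\<close> by (simp add: h_def)
    ultimately show "a \<le> t k" "t (Suc k) \<le> b" "t (Suc k) = t k + h"
      using \<open>h > 0\<close> by (auto simp: t_def algebra_simps)
  qed
  have piece: "norm (integral {t k..t (Suc k)} f) \<le> B + (if k \<in> Bad then M * h else 0)"
    if k: "k < n" for k
  proof (cases "k \<in> Bad")
    case True
    have "norm (integral {t k..t (Suc k)} f) \<le> M * (t (Suc k) - t k)"
      using G_bound t[OF k] \<open>h > 0\<close>
      by (intro integral_bound continuous_on_subset[OF f_cont]) (auto simp: f_def norm_mult)
    then show ?thesis
      using True t[OF k] \<open>B \<ge> 0\<close> by simp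
  next
    case False
    have sub: "{t k..t (Suc k)} \<subseteq> {a..b}"
      using t[OF k] by auto
    have "norm (integral {t k..t (Suc k)} f) \<le> B"
      unfolding f_def B_def
    proof (rule norm_integral_oscillatory_piece_le[OF _ _ \<epsilon> \<delta>])
      show "\<delta> \<le> \<bar>\<phi>' (t k)\<bar>"
        using False k by (auto simp: Bad_def)
      show "continuous_on {t k..t (Suc k)} G"
        using contG sub by (rule continuous_on_subset)
      fix x assume x: "x \<in> {t k..t (Suc k)}"
      then have "x \<in> {a..b}" "t k \<in> {a..b}" "\<bar>x - t k\<bar> \<le> h"
        using sub t[OF k] by auto
      then show "(\<phi> has_real_derivative \<phi>' x) (at x within {t k..t (Suc k)})"
        "norm (G x) \<le> M" "norm (G x - G (t k)) \<le> r" "\<bar>\<phi>' x - \<phi>' (t k)\<bar> \<le> \<rho>"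
        using DERIV_subset[OF der sub] G_bound G_osc \<phi>'_osc by auto
    qed (use t[OF k] \<open>h > 0\<close> in auto)
    then show ?thesis
      using False by simp
  qed
  have "Bad \<subseteq> {k. k < n \<and> a + real k * h \<in> (\<Union>i<N. {c i..d i})}"
  proof
    fix k assume "k \<in> Bad"
    then have "k < n" "t k \<in> {t \<in> {a..b}. \<bar>\<phi>' t\<bar> < \<delta>}"
      using t[of k] \<open>h > 0\<close> by (auto simp: Bad_def)
    then show "k \<in> {k. k < n \<and> a + real k * h \<in> (\<Union>i<N. {c i..d i})}"
      using subsetD[OF cover] by (simp add: t_def)
  qed
  then have "card Bad \<le> card {k. k < n \<and> a + real k * h \<in> (\<Union>i<N. {c i..d i})}"
    by (rule card_mono[rotated]) simp
  then have "h * real (card Bad) \<le> h * real (card {k. k < n \<and> a + real k * h \<in> (\<Union>i<N. {c i..d i})})"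
    using \<open>h > 0\<close> by simp
  also have "\<dots> \<le> (\<Sum>i<N. d i - c i) + N * h"
    using \<open>h > 0\<close> cd by (rule card_grid_points_in_union_le)
  finally have "h * real (card Bad) \<le> (\<Sum>i<N. d i - c i) + N * h" .
  then have card_Bad: "M * h * real (card Bad) \<le> M * ((\<Sum>i<N. d i - c i) + N * h)"
    using \<open>0 \<le> M\<close> by (metis mult.assoc mult_left_mono)
  have "integral {a..b} f = (\<Sum>k<n. integral {t k..t (Suc k)} f)"
    using integral_uniform_subdivision[of h f a n] \<open>h > 0\<close> \<open>n > 0\<close> integrable_continuous_interval[OF f_cont]
    by (simp add: t_def h_def)
  then have "norm (integral {a..b} f) \<le> (\<Sum>k<n. B + (if k \<in> Bad then M * h else 0))"
    by (metis (no_types, lifting) lessThan_iff norm_sum order_trans piece sum_mono)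
  also have "\<dots> = real n * B + M * h * real (card Bad)"
    by (simp add: sum.distrib sum.If_cases Bad_def Int_def)
  finally show ?thesis
    using card_Bad unfolding f_def B_def by linarith
qed

text \<open>With pieces of length about \<open>K \<epsilon>\<close>, the non-stationary pieces contribute
  \<open>O(1 / (K \<delta>))\<close> in total, while the errors from freezing the amplitude and linearizing the phase
  are controlled by the oscillations \<open>r\<close> and \<open>\<rho>\<close> at scale \<open>K \<epsilon>\<close>.\<close>

lemma norm_integral_oscillatory_le:
  fixes G :: "real \<Rightarrow> complex" and \<phi> \<phi>' :: "real \<Rightarrow> real" and c d :: "nat \<Rightarrow> real"
  assumes "a < b" "K > 0" "\<epsilon> > 0" "\<delta> > 0"
    and contG: "continuous_on {a..b} G"
    and der: "\<And>x. x \<in> {a..b} \<Longrightarrow> (\<phi> has_real_derivative \<phi>' x) (at x within {a..b})"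
    and G_bound: "\<And>x. x \<in> {a..b} \<Longrightarrow> norm (G x) \<le> M"
    and G_osc: "\<And>x y. x \<in> {a..b} \<Longrightarrow> y \<in> {a..b} \<Longrightarrow> \<bar>x - y\<bar> \<le> K * \<epsilon> \<Longrightarrow> norm (G x - G y) \<le> r"
    and \<phi>'_osc: "\<And>x y. x \<in> {a..b} \<Longrightarrow> y \<in> {a..b} \<Longrightarrow> \<bar>x - y\<bar> \<le> K * \<epsilon> \<Longrightarrow> \<bar>\<phi>' x - \<phi>' y\<bar> \<le> \<rho>"
    and cd: "\<And>i. i < N \<Longrightarrow> c i \<le> d i"
    and cover: "{t \<in> {a..b}. \<bar>\<phi>' t\<bar> < \<delta>} \<subseteq> (\<Union>i<N. {c i..d i})"
  shows "norm (integral {a..b} (\<lambda>t. G t * cis (\<phi> t / \<epsilon>)))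
     \<le> 2 * M * (b - a) / (K * \<delta>) + 2 * M * \<epsilon> / \<delta> + (b - a) * (r + M * \<rho> * K)
        + M * ((\<Sum>i<N. d i - c i) + N * K * \<epsilon>)"
proof -
  define n where "n = nat \<lceil>(b - a) / (K * \<epsilon>)\<rceil>"
  define h where "h = (b - a) / n"
  have "(b - a) / (K * \<epsilon>) > 0"
    using assms(1-3) by simp
  then have n: "(b - a) / (K * \<epsilon>) \<le> real n" "real n < (b - a) / (K * \<epsilon>) + 1"
    unfolding n_def by linarith+
  then have "n > 0"
    using \<open>(b - a) / (K * \<epsilon>) > 0\<close> by linarith
  have nh: "real n * h = b - a"
    using \<open>n > 0\<close> by (simp add: h_def)
  have "h > 0" "h \<le> K * \<epsilon>"
    using n \<open>n > 0\<close> assms(1-3) by (auto simp: h_def field_simps)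
  have "0 \<le> M" "0 \<le> r" "0 \<le> \<rho>"
    using G_bound[of a] G_osc[of a a] \<phi>'_osc[of a a] assms(1-3)
    by (auto intro: order_trans[OF norm_ge_zero])
  have "norm (integral {a..b} (\<lambda>t. G t * cis (\<phi> t / \<epsilon>)))
     \<le> real n * (2 * M * \<epsilon> / \<delta> + h * (r + M * \<rho> * h / \<epsilon>)) + M * ((\<Sum>i<N. d i - c i) + N * h)"
    using \<open>h \<le> K * \<epsilon>\<close>
    by (intro norm_integral_oscillatory_subdivision_le[OF \<open>a < b\<close> \<open>n > 0\<close> h_def \<open>\<epsilon> > 0\<close> \<open>\<delta> > 0\<close>
          contG der G_bound _ _ cd cover] G_osc \<phi>'_osc) auto
  moreover have "real n * (2 * M * \<epsilon> / \<delta>) \<le> ((b - a) / (K * \<epsilon>) + 1) * (2 * M * \<epsilon> / \<delta>)"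
    using n \<open>0 \<le> M\<close> assms(3,4) by (intro mult_right_mono) auto
  moreover have "((b - a) / (K * \<epsilon>) + 1) * (2 * M * \<epsilon> / \<delta>) = 2 * M * (b - a) / (K * \<delta>) + 2 * M * \<epsilon> / \<delta>"
    using assms(2-4) by (simp add: field_simps)
  moreover have "real n * (h * (r + M * \<rho> * h / \<epsilon>)) \<le> (b - a) * (r + M * \<rho> * K)"
  proof -
    have "M * \<rho> * (h / \<epsilon>) \<le> M * \<rho> * K"
      using \<open>h \<le> K * \<epsilon>\<close> \<open>0 \<le> M\<close> \<open>0 \<le> \<rho>\<close> assms(3)
      by (intro mult_left_mono) (auto simp: divide_le_eq)
    then show ?thesis
      using nh assms(1) by (simp add: mult.assoc[symmetric])
  qed
  moreover have "M * ((\<Sum>i<N. d i - c i) + N * h) \<le> M * ((\<Sum>i<N. d i - c i) + N * K * \<epsilon>)"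
    using \<open>h \<le> K * \<epsilon>\<close> \<open>0 \<le> M\<close>
    by (intro mult_left_mono add_left_mono) (auto simp: mult.assoc intro: mult_left_mono)
  ultimately show ?thesis
    by (simp only: distrib_left)
qed

text \<open>Conditions (1) and (2) of the theorem, for \<open>f = (\<lambda>t. m \<bullet> Y' t)\<close>.\<close>

definition thin_sublevel_sets :: "real set \<Rightarrow> (real \<Rightarrow> real) \<Rightarrow> bool" where
  "thin_sublevel_sets S f \<longleftrightarrow>
    (\<exists>\<delta>0>0. \<exists>N :: real \<Rightarrow> nat. \<exists>c d :: real \<Rightarrow> nat \<Rightarrow> real.
       (\<forall>\<delta>\<in>{0<..<\<delta>0}. (\<forall>i<N \<delta>. c \<delta> i \<le> d \<delta> i) \<and> {t \<in> S. \<bar>f t\<bar> \<le> \<delta>} \<subseteq> (\<Union>i<N \<delta>. {c \<delta> i..d \<delta> i}))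
       \<and> ((\<lambda>\<delta>. \<Sum>i<N \<delta>. d \<delta> i - c \<delta> i) \<longlongrightarrow> 0) (at_right 0))"

lemma thin_sublevel_setsE:
  assumes "thin_sublevel_sets S f"
  obtains \<delta>0 and N :: "real \<Rightarrow> nat" and c d :: "real \<Rightarrow> nat \<Rightarrow> real" where "\<delta>0 > 0"
    and "\<forall>\<delta>\<in>{0<..<\<delta>0}.
      (\<forall>i<N \<delta>. c \<delta> i \<le> d \<delta> i) \<and> {t \<in> S. \<bar>f t\<bar> \<le> \<delta>} \<subseteq> (\<Union>i<N \<delta>. {c \<delta> i..d \<delta> i})"
    and "((\<lambda>\<delta>. \<Sum>i<N \<delta>. d \<delta> i - c \<delta> i) \<longlongrightarrow> 0) (at_right 0)"
  using assms unfolding thin_sublevel_sets_def by (elim exE conjE) (rule that; assumption)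

lemma thin_sublevel_setsI:
  fixes N :: "real \<Rightarrow> nat" and c d :: "real \<Rightarrow> nat \<Rightarrow> real"
  assumes "\<delta>0 > 0"
    and "\<forall>\<delta>\<in>{0<..<\<delta>0}.
      (\<forall>i<N \<delta>. c \<delta> i \<le> d \<delta> i) \<and> {t \<in> S. \<bar>f t\<bar> \<le> \<delta>} \<subseteq> (\<Union>i<N \<delta>. {c \<delta> i..d \<delta> i})"
    and "((\<lambda>\<delta>. \<Sum>i<N \<delta>. d \<delta> i - c \<delta> i) \<longlongrightarrow> 0) (at_right 0)"
  shows "thin_sublevel_sets S f"
  unfolding thin_sublevel_sets_def
  by (rule exI[of _ \<delta>0], rule conjI[OF assms(1)], rule exI[of _ N], rule exI[of _ c], rule exI[of _ d],
      rule conjI[OF assms(2,3)])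

lemma thin_sublevel_sets_cmult:
  assumes "thin_sublevel_sets S f" "k \<noteq> 0"
  shows "thin_sublevel_sets S (\<lambda>t. k * f t)"
proof -
  from assms(1) obtain \<delta>0 and N :: "real \<Rightarrow> nat" and c d :: "real \<Rightarrow> nat \<Rightarrow> real" where "\<delta>0 > 0"
    and cover: "\<forall>\<delta>\<in>{0<..<\<delta>0}.
      (\<forall>i<N \<delta>. c \<delta> i \<le> d \<delta> i) \<and> {t \<in> S. \<bar>f t\<bar> \<le> \<delta>} \<subseteq> (\<Union>i<N \<delta>. {c \<delta> i..d \<delta> i})"
    and lim: "((\<lambda>\<delta>. \<Sum>i<N \<delta>. d \<delta> i - c \<delta> i) \<longlongrightarrow> 0) (at_right 0)"
    by (rule thin_sublevel_setsE)
  define a where "a = \<bar>k\<bar>"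
  have "a > 0"
    using assms(2) by (simp add: a_def)
  have sublevel: "{t \<in> S. \<bar>k * f t\<bar> \<le> \<delta>} = {t \<in> S. \<bar>f t\<bar> \<le> \<delta> / a}" for \<delta>
    using \<open>a > 0\<close> by (simp add: a_def abs_mult pos_le_divide_eq mult.commute)
  have "filterlim (\<lambda>\<delta>. \<delta> / a) (at_right 0) (at_right 0)"
  proof (rule tendsto_imp_filterlim_at_right)
    show "((\<lambda>\<delta>. \<delta> / a) \<longlongrightarrow> 0) (at_right 0)"
      by (rule tendsto_divide_zero[OF tendsto_ident_at])
    show "\<forall>\<^sub>F \<delta> in at_right 0. \<delta> / a > 0"
      using \<open>a > 0\<close> eventually_at_right_less[of 0] by (auto elim: eventually_mono)
  qed
  have "a * \<delta>0 > 0"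
    using \<open>\<delta>0 > 0\<close> \<open>a > 0\<close> by simp
  moreover have "\<forall>\<delta>\<in>{0<..<a * \<delta>0}. (\<forall>i<N (\<delta> / a). c (\<delta> / a) i \<le> d (\<delta> / a) i) \<and>
      {t \<in> S. \<bar>k * f t\<bar> \<le> \<delta>} \<subseteq> (\<Union>i<N (\<delta> / a). {c (\<delta> / a) i..d (\<delta> / a) i})"
  proof
    fix \<delta> assume "\<delta> \<in> {0<..<a * \<delta>0}"
    then have "\<delta> / a \<in> {0<..<\<delta>0}"
      using \<open>a > 0\<close> by (auto simp: pos_divide_less_eq mult.commute)
    then show "(\<forall>i<N (\<delta> / a). c (\<delta> / a) i \<le> d (\<delta> / a) i) \<and>
        {t \<in> S. \<bar>k * f t\<bar> \<le> \<delta>} \<subseteq> (\<Union>i<N (\<delta> / a). {c (\<delta> / a) i..d (\<delta> / a) i})"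
      unfolding sublevel by (rule bspec[OF cover])
  qed
  moreover have "((\<lambda>\<delta>. \<Sum>i<N (\<delta> / a). d (\<delta> / a) i - c (\<delta> / a) i) \<longlongrightarrow> 0) (at_right 0)"
    by (rule filterlim_compose[OF lim \<open>filterlim (\<lambda>\<delta>. \<delta> / a) (at_right 0) (at_right 0)\<close>])
  ultimately show ?thesis
    by (rule thin_sublevel_setsI)
qed

lemma thin_sublevel_sets_small_cover:
  assumes "thin_sublevel_sets S f" "e > 0"
  obtains \<delta> and N :: nat and c d :: "nat \<Rightarrow> real" where "\<delta> > 0" "\<And>i. i < N \<Longrightarrow> c i \<le> d i"
    "{t \<in> S. \<bar>f t\<bar> < \<delta>} \<subseteq> (\<Union>i<N. {c i..d i})" "(\<Sum>i<N. d i - c i) < e"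
proof -
  from assms(1) obtain \<delta>0 and N :: "real \<Rightarrow> nat" and c d :: "real \<Rightarrow> nat \<Rightarrow> real" where "\<delta>0 > 0"
    and cover: "\<forall>\<delta>\<in>{0<..<\<delta>0}. (\<forall>i<N \<delta>. c \<delta> i \<le> d \<delta> i) \<and>
      {t \<in> S. \<bar>f t\<bar> \<le> \<delta>} \<subseteq> (\<Union>i<N \<delta>. {c \<delta> i..d \<delta> i})"
    and lim: "((\<lambda>\<delta>. \<Sum>i<N \<delta>. d \<delta> i - c \<delta> i) \<longlongrightarrow> 0) (at_right 0)"
    by (rule thin_sublevel_setsE)
  have "\<forall>\<^sub>F \<delta> in at_right 0. (\<Sum>i<N \<delta>. d \<delta> i - c \<delta> i) < e"
    using \<open>e > 0\<close> by (rule order_tendstoD(2)[OF lim])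
  then have "\<forall>\<^sub>F \<delta> in at_right 0. \<delta> \<in> {0<..<\<delta>0} \<and> (\<Sum>i<N \<delta>. d \<delta> i - c \<delta> i) < e"
    by (rule eventually_conj[OF eventually_at_right_real[OF \<open>\<delta>0 > 0\<close>]])
  then obtain \<delta> where "\<delta> \<in> {0<..<\<delta>0}" "(\<Sum>i<N \<delta>. d \<delta> i - c \<delta> i) < e"
    using eventually_happens[of _ "at_right (0::real)"] by auto
  moreover from this cover have "\<And>i. i < N \<delta> \<Longrightarrow> c \<delta> i \<le> d \<delta> i"
    "{t \<in> S. \<bar>f t\<bar> < \<delta>} \<subseteq> (\<Union>i<N \<delta>. {c \<delta> i..d \<delta> i})"
    by fastforce+
  ultimately show ?thesis
    by (intro that[of \<delta> "N \<delta>" "c \<delta>" "d \<delta>"]) auto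
qed

text \<open>Given \<open>\<eta>\<close>, first fix \<open>\<delta>\<close> so that the near-stationary set has small total length, then the
  scale factor \<open>K\<close> and the admissible oscillations \<open>r\<close>, \<open>\<rho>\<close>; the preceding bound then tends to a
  value below \<open>\<eta>\<close> as \<open>\<epsilon> \<rightarrow> 0\<close>.\<close>

lemma oscillatory_integral_tendsto_zero:
  fixes G :: "real \<Rightarrow> complex" and \<phi> \<phi>' :: "real \<Rightarrow> real"
  assumes "a < b" and contG: "continuous_on {a..b} G"
    and der: "\<And>x. x \<in> {a..b} \<Longrightarrow> (\<phi> has_real_derivative \<phi>' x) (at x within {a..b})"
    and cont\<phi>': "continuous_on {a..b} \<phi>'"
    and thin: "thin_sublevel_sets {a..b} \<phi>'"
  shows "((\<lambda>\<epsilon>. integral {a..b} (\<lambda>t. G t * cis (\<phi> t / \<epsilon>))) \<longlongrightarrow> 0) (at_right 0)"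
proof (rule tendstoI)
  fix \<eta> :: real
  assume "\<eta> > 0"
  define L where "L = b - a"
  have "L > 0"
    using \<open>a < b\<close> by (simp add: L_def)
  obtain M where "M > 0" and G_bound: "\<And>x. x \<in> {a..b} \<Longrightarrow> norm (G x) \<le> M"
    using compact_imp_bounded[OF compact_continuous_image[OF contG compact_Icc]]
    by (auto simp: bounded_pos)
  have "\<eta> / (4 * M) > 0"
    using \<open>\<eta> > 0\<close> \<open>M > 0\<close> by simp
  then obtain \<delta> and N :: nat and c d :: "nat \<Rightarrow> real" where "\<delta> > 0" and cd: "\<And>i. i < N \<Longrightarrow> c i \<le> d i"
    and cover: "{t \<in> {a..b}. \<bar>\<phi>' t\<bar> < \<delta>} \<subseteq> (\<Union>i<N. {c i..d i})"
    and small: "(\<Sum>i<N. d i - c i) < \<eta> / (4 * M)"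
    by (rule thin_sublevel_sets_small_cover[OF thin]) blast
  define K where "K = 16 * M * L / (\<delta> * \<eta>)"
  define r where "r = \<eta> / (8 * L)"
  define \<rho> where "\<rho> = \<eta> / (8 * L * M * K)"
  have "K > 0" "r > 0" "\<rho> > 0"
    using \<open>M > 0\<close> \<open>L > 0\<close> \<open>\<eta> > 0\<close> \<open>\<delta> > 0\<close> by (simp_all add: K_def r_def \<rho>_def)
  obtain s1 where "s1 > 0"
    and G_osc: "\<And>x y. x \<in> {a..b} \<Longrightarrow> y \<in> {a..b} \<Longrightarrow> dist y x < s1 \<Longrightarrow> dist (G y) (G x) < r"
    using compact_uniformly_continuous[OF contG compact_Icc] \<open>r > 0\<close>
    unfolding uniformly_continuous_on_def by metis
  obtain s2 where "s2 > 0"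
    and \<phi>'_osc: "\<And>x y. x \<in> {a..b} \<Longrightarrow> y \<in> {a..b} \<Longrightarrow> dist y x < s2 \<Longrightarrow> dist (\<phi>' y) (\<phi>' x) < \<rho>"
    using compact_uniformly_continuous[OF cont\<phi>' compact_Icc] \<open>\<rho> > 0\<close>
    unfolding uniformly_continuous_on_def by metis
  define B where "B \<epsilon> = 2 * M * L / (K * \<delta>) + 2 * M * \<epsilon> / \<delta> + L * (r + M * \<rho> * K)
    + M * ((\<Sum>i<N. d i - c i) + N * K * \<epsilon>)" for \<epsilon>
  have "B 0 < \<eta>"
    using small \<open>M > 0\<close> \<open>L > 0\<close> \<open>K > 0\<close> \<open>\<eta> > 0\<close> \<open>\<delta> > 0\<close>
    by (simp add: B_def K_def r_def \<rho>_def field_simps)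
  moreover have "(B \<longlongrightarrow> B 0) (at_right 0)"
    unfolding B_def using \<open>\<delta> > 0\<close> by (intro tendsto_intros) auto
  ultimately have "\<forall>\<^sub>F \<epsilon> in at_right 0. B \<epsilon> < \<eta>"
    by (rule order_tendstoD(2)[rotated])
  moreover have "\<forall>\<^sub>F \<epsilon> in at_right 0. 0 < \<epsilon> \<and> K * \<epsilon> < min s1 s2"
    using eventually_at_right_real[of 0 "min s1 s2 / K"] \<open>s1 > 0\<close> \<open>s2 > 0\<close> \<open>K > 0\<close>
    by (auto elim!: eventually_mono simp: field_simps)
  ultimately show "\<forall>\<^sub>F \<epsilon> in at_right 0. dist (integral {a..b} (\<lambda>t. G t * cis (\<phi> t / \<epsilon>))) 0 < \<eta>"
  proof eventually_elim
    case (elim \<epsilon>)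
    have "norm (integral {a..b} (\<lambda>t. G t * cis (\<phi> t / \<epsilon>))) \<le> B \<epsilon>"
      unfolding B_def L_def
    proof (rule norm_integral_oscillatory_le[OF \<open>a < b\<close> \<open>K > 0\<close> _ _ contG der G_bound _ _ cd cover])
      fix x y assume "x \<in> {a..b}" "y \<in> {a..b}" "\<bar>x - y\<bar> \<le> K * \<epsilon>"
      then show "norm (G x - G y) \<le> r" "\<bar>\<phi>' x - \<phi>' y\<bar> \<le> \<rho>"
        using G_osc[of y x] \<phi>'_osc[of y x] elim by (auto simp: dist_norm dist_real_def)
    qed (use elim \<open>\<delta> > 0\<close> in auto)
    then show ?case
      using elim by simp
  qed
qed

section \<open>Trigonometric polynomials on the torus\<close>

definition torus_char :: "real^'n::finite \<Rightarrow> real^'n \<Rightarrow> complex" where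
  "torus_char m y = cis (2 * pi * (m \<bullet> y))"

lemma torus_char_add: "torus_char (m + m') y = torus_char m y * torus_char m' y"
  by (simp add: torus_char_def inner_add_left distrib_left cis_mult)

lemma torus_char_shift: "torus_char m (y + v) = torus_char m y * torus_char m v"
  by (simp add: torus_char_def inner_add_right distrib_left cis_mult)

lemma torus_char_zero [simp]: "torus_char 0 = (\<lambda>y. 1)"
  by (simp add: torus_char_def fun_eq_iff)

lemma continuous_on_torus_char [continuous_intros]:
  "continuous_on S f \<Longrightarrow> continuous_on S (\<lambda>x. torus_char m (f x))"
  unfolding torus_char_def by (intro continuous_intros)

text \<open>Coefficients depend on a parameter \<open>s\<close>; the list holds pairs (coefficient, frequency).\<close>

type_synonym ('s, 'n) trig_poly = "(('s \<Rightarrow> complex) \<times> (real^'n)) list"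

definition trig_eval :: "('s, 'n::finite) trig_poly \<Rightarrow> 's \<Rightarrow> real^'n \<Rightarrow> complex" where
  "trig_eval xs s y = (\<Sum>p\<leftarrow>xs. fst p s * torus_char (snd p) y)"

definition trig_poly_on :: "'s::topological_space set \<Rightarrow> ('s, 'n::finite) trig_poly \<Rightarrow> bool" where
  "trig_poly_on D xs \<longleftrightarrow> (\<forall>p\<in>set xs. continuous_on D (fst p) \<and> (\<forall>i. snd p $ i \<in> \<int>))"

definition trig_mean :: "('s, 'n::finite) trig_poly \<Rightarrow> 's \<Rightarrow> complex" where
  "trig_mean xs s = (\<Sum>p\<leftarrow>filter (\<lambda>p. snd p = 0) xs. fst p s)"

definition trig_mult :: "('s, 'n::finite) trig_poly \<Rightarrow> ('s, 'n) trig_poly \<Rightarrow> ('s, 'n) trig_poly" where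
  "trig_mult xs ys = [(\<lambda>s. fst p s * fst q s, snd p + snd q). p \<leftarrow> xs, q \<leftarrow> ys]"

lemma trig_eval_simps [simp]:
  "trig_eval [] s = (\<lambda>y. 0)"
  "trig_eval (p # xs) s y = fst p s * torus_char (snd p) y + trig_eval xs s y"
  "trig_eval (xs @ ys) s y = trig_eval xs s y + trig_eval ys s y"
  by (simp_all add: trig_eval_def fun_eq_iff)

lemma trig_mean_simps [simp]:
  "trig_mean [] = (\<lambda>s. 0)"
  "trig_mean (p # xs) s = (if snd p = 0 then fst p s + trig_mean xs s else trig_mean xs s)"
  by (simp_all add: trig_mean_def fun_eq_iff)

lemma trig_poly_on_simps [simp]:
  "trig_poly_on D []"
  "trig_poly_on D (p # xs) \<longleftrightarrow> continuous_on D (fst p) \<and> (\<forall>i. snd p $ i \<in> \<int>) \<and> trig_poly_on D xs"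
  "trig_poly_on D (xs @ ys) \<longleftrightarrow> trig_poly_on D xs \<and> trig_poly_on D ys"
  by (auto simp: trig_poly_on_def)

lemma trig_eval_mult: "trig_eval (trig_mult xs ys) s y = trig_eval xs s y * trig_eval ys s y"
proof (induction xs)
  case Nil
  then show ?case by (simp add: trig_mult_def)
next
  case (Cons p xs)
  have "trig_eval (map (\<lambda>q. (\<lambda>s. fst p s * fst q s, snd p + snd q)) ys) s y
      = fst p s * torus_char (snd p) y * trig_eval ys s y" for ys
    by (induction ys) (simp_all add: torus_char_add algebra_simps)
  then show ?case
    using Cons by (simp add: trig_mult_def algebra_simps)
qed

lemma trig_poly_on_mult: "trig_poly_on D xs \<Longrightarrow> trig_poly_on D ys \<Longrightarrow> trig_poly_on D (trig_mult xs ys)"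
  by (auto simp: trig_poly_on_def trig_mult_def intro!: continuous_on_mult Ints_add)

lemma continuous_on_trig_eval:
  assumes "trig_poly_on D xs" "continuous_on D g"
  shows "continuous_on D (\<lambda>s. trig_eval xs s (g s))"
  using assms by (induction xs) (auto intro!: continuous_intros)

lemma continuous_on_trig_eval_right [continuous_intros]: "continuous_on S (trig_eval xs s)"
  by (induction xs) (auto intro!: continuous_intros)

lemma continuous_on_trig_mean: "trig_poly_on D xs \<Longrightarrow> continuous_on D (trig_mean xs)"
proof (induction xs)
  case (Cons p xs)
  then show ?case
    by (cases "snd p = 0") (auto intro!: continuous_intros)
qed simp

lemma One_vec_nth [simp]: "(One :: real^'n) $ i = 1"
proof -
  have "(One :: real^'n) \<bullet> axis i 1 = 1"
    by (rule inner_sum_Basis) simp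
  then show ?thesis
    by (simp only: inner_axis inner_real_def mult_1_right)
qed

lemma sum_Basis_vec_nth [simp]: "(\<Sum>x\<in>(Basis :: (real^'n) set). x $ i) = 1"
  using One_vec_nth[of i] by (simp add: sum_component)

lemma axis_nth_if: "(axis j t :: real^'n) $ i = (if i = j then t else 0)"
  by (simp add: axis_def)

lemma cbox_slices_shifted:
  fixes j :: "'n::finite" and \<tau> :: real
  assumes "0 \<le> \<tau>" "\<tau> \<le> 1"
  shows "cbox (axis j \<tau>) (One + axis j \<tau>) \<inter> {x. x \<bullet> axis j 1 \<le> 1} = cbox (axis j \<tau>) (One :: real^'n)"
    and "cbox (axis j \<tau>) (One + axis j \<tau>) \<inter> {x. x \<bullet> axis j 1 \<ge> 1}
      = cbox (0 + axis j 1) ((One + axis j \<tau> - axis j 1) + axis j 1)"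
  using assms unfolding set_eq_iff mem_box_cart Int_iff mem_Collect_eq inner_axis
  by (auto simp: axis_nth_if)


lemma cbox_slices_unit:
  fixes j :: "'n::finite" and \<tau> :: real
  assumes "0 \<le> \<tau>" "\<tau> \<le> 1"
  shows "cbox 0 One \<inter> {x. x \<bullet> axis j 1 \<le> \<tau>} = cbox 0 (One + axis j \<tau> - axis j (1 :: real))"
    and "cbox 0 One \<inter> {x. x \<bullet> axis j 1 \<ge> \<tau>} = cbox (axis j \<tau>) (One :: real^'n)"
proof (safe intro!: set_eqI)
  fix x :: "real^'n"
  show "x \<in> cbox 0 One \<Longrightarrow> x \<bullet> axis j 1 \<le> \<tau> \<Longrightarrow> x \<in> cbox 0 (One + axis j \<tau> - axis j 1)"
    "x \<in> cbox 0 One \<Longrightarrow> \<tau> \<le> x \<bullet> axis j 1 \<Longrightarrow> x \<in> cbox (axis j \<tau>) One"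
    by (auto simp: mem_box_cart inner_axis axis_nth_if)
  assume x: "x \<in> cbox 0 (One + axis j \<tau> - axis j 1)"
  then have x_bounds: "0 \<le> x $ i \<and> x $ i \<le> (if i = j then \<tau> else 1)" for i
    unfolding mem_box_cart by (auto simp: axis_nth_if split: if_splits)
  have "0 \<le> x $ i \<and> x $ i \<le> 1" for i
    using x_bounds[of i] assms by (cases "i = j") auto
  then show "x \<in> cbox 0 One" "x \<bullet> axis j 1 \<le> \<tau>"
    using x_bounds[of j] by (auto simp: mem_box_cart inner_axis)
next
  fix x :: "real^'n"
  assume "x \<in> cbox (axis j \<tau>) One"
  then have x_bounds: "(if i = j then \<tau> else 0) \<le> x $ i \<and> x $ i \<le> 1" for i
    unfolding mem_box_cart by (auto simp: axis_nth_if split: if_splits)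
  have "0 \<le> x $ i \<and> x $ i \<le> 1" for i
    using x_bounds[of i] assms by (cases "i = j") auto
  then show "x \<in> cbox 0 One" "\<tau> \<le> x \<bullet> axis j 1"
    using x_bounds[of j] by (auto simp: mem_box_cart inner_axis)
qed


text \<open>Cutting the translated cube at \<open>x $ j = 1\<close> and moving the upper part back by \<open>axis j 1\<close>
  reassembles the unit cube.\<close>

lemma integral_unit_cube_translate:
  fixes g :: "real^'n::finite \<Rightarrow> complex"
  assumes cont: "continuous_on UNIV g" and per: "\<And>y. g (y + axis j 1) = g y"
    and "0 \<le> \<tau>" "\<tau> \<le> 1"
  shows "integral (cbox 0 One) (\<lambda>y. g (y + axis j \<tau>)) = integral (cbox 0 One) g"
proof -
  define v :: "real^'n" where "v = axis j \<tau>"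
  define w :: "real^'n" where "w = One + v - axis j 1"
  have int: "g integrable_on cbox a b" for a b
    by (rule integrable_continuous) (rule continuous_on_subset[OF cont], simp)
  have "axis j (1::real) \<in> Basis"
    by simp
  have "integral (cbox 0 One) (\<lambda>y. g (y + v)) = integral (cbox v (One + v)) g"
    using has_integral_shift_cbox_iff[of g v "integral (cbox (0 + v) (One + v)) g" 0 One] int
    by (simp add: integrable_integral o_def add.commute integral_unique)
  also have "\<dots> = integral (cbox v One) g + integral (cbox (0 + axis j 1) (w + axis j 1)) g"
    using integral_split[OF int \<open>axis j 1 \<in> Basis\<close>, of v "One + v" 1]
    unfolding v_def w_def cbox_slices_shifted[OF assms(3,4)] .
  also have "integral (cbox (0 + axis j 1) (w + axis j 1)) g = integral (cbox 0 w) g"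
  proof -
    have "(g \<circ> (+) (axis j 1)) = g"
      using per by (auto simp: o_def add.commute)
    then show ?thesis
      using has_integral_shift_cbox_iff[of g "axis j 1" _ 0 w] integrable_integral[OF int]
      by (metis integral_unique)
  qed
  also have "integral (cbox v One) g + integral (cbox 0 w) g = integral (cbox 0 One) g"
    using integral_split[OF int \<open>axis j 1 \<in> Basis\<close>, of 0 One \<tau>]
    unfolding v_def w_def cbox_slices_unit[OF assms(3,4)] by (simp only: add.commute)
  finally show ?thesis
    unfolding v_def .
qed

text \<open>Translating by half a period in a direction where \<open>m\<close> is nonzero changes the sign of the
  character, but does not change its integral over the cube.\<close>

lemma integral_unit_cube_torus_char:
  fixes m :: "real^'n::finite"
  assumes "\<forall>i. m $ i \<in> \<int>" "m \<noteq> 0"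
  shows "integral (cbox 0 One) (torus_char m) = 0"
proof -
  obtain j where "m $ j \<noteq> 0"
    using assms(2) by (metis vec_eq_iff zero_index)
  have "m $ j \<in> \<int>"
    using assms(1) by simp
  then have "\<bar>m $ j\<bar> \<ge> 1"
    using \<open>m $ j \<noteq> 0\<close> by (metis Ints_nonzero_abs_ge1)
  define \<tau> where "\<tau> = 1 / (2 * \<bar>m $ j\<bar>)"
  have "0 \<le> \<tau>" "\<tau> \<le> 1"
    using \<open>\<bar>m $ j\<bar> \<ge> 1\<close> by (auto simp: \<tau>_def field_simps)
  have "torus_char m (axis j 1) = 1"
    using \<open>m $ j \<in> \<int>\<close> by (simp add: torus_char_def inner_axis)
  moreover have "torus_char m (axis j \<tau>) = -1"
  proof -
    have "2 * pi * (m \<bullet> axis j \<tau>) = (if m $ j > 0 then pi else - pi)"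
      using \<open>m $ j \<noteq> 0\<close> by (simp add: \<tau>_def inner_axis field_simps)
    then show ?thesis
      by (simp add: torus_char_def complex_eq_iff)
  qed
  ultimately have "integral (cbox 0 One) (\<lambda>y. - torus_char m y) = integral (cbox 0 One) (torus_char m)"
    using integral_unit_cube_translate[of "torus_char m" j \<tau>] \<open>0 \<le> \<tau>\<close> \<open>\<tau> \<le> 1\<close>
    by (simp add: torus_char_shift continuous_on_torus_char continuous_on_id)
  then show ?thesis
    by (simp add: integral_neg)
qed

lemma integral_unit_cube_trig_eval:
  assumes "\<forall>p\<in>set xs. \<forall>i. snd p $ i \<in> \<int>"
  shows "integral (cbox 0 One) (trig_eval xs s) = trig_mean xs s"
  using assms
proof (induction xs)
  case (Cons p xs)
  have "(\<lambda>y. fst p s * torus_char (snd p) y) integrable_on cbox 0 One"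
    "trig_eval xs s integrable_on cbox 0 One"
    by (auto intro!: integrable_continuous continuous_intros)
  moreover have "trig_eval (p # xs) s = (\<lambda>y. fst p s * torus_char (snd p) y + trig_eval xs s y)"
    by (simp add: fun_eq_iff)
  ultimately have "integral (cbox 0 One) (trig_eval (p # xs) s)
      = fst p s * integral (cbox 0 One) (torus_char (snd p)) + integral (cbox 0 One) (trig_eval xs s)"
    by (simp add: integral_add)
  also have "\<dots> = trig_mean (p # xs) s"
    using Cons integral_unit_cube_torus_char[of "snd p"]
    by (cases "snd p = 0") (simp_all add: content_cbox_if)
  finally show ?case .
qed simp

section \<open>Approximation of periodic functions by trigonometric polynomials\<close>

lemma continuous_on_compact_quotient:
  fixes Q :: "'a::topological_space \<Rightarrow> 'b::t2_space" and F :: "'b \<Rightarrow> 'c::topological_space"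
  assumes "compact S" "continuous_on S Q" "continuous_on S (\<lambda>x. F (Q x))"
  shows "continuous_on (Q ` S) F"
proof -
  have "closed (Q ` S \<inter> F -` B)" if "closed B" for B
  proof -
    have "closedin (top_of_set S) (S \<inter> (\<lambda>x. F (Q x)) -` B)"
      using assms(3) \<open>closed B\<close> by (rule continuous_closedin_preimage)
    then have "compact (S \<inter> (\<lambda>x. F (Q x)) -` B)"
      using assms(1) closedin_compact by blast
    then have "compact (Q ` (S \<inter> (\<lambda>x. F (Q x)) -` B))"
      by (intro compact_continuous_image continuous_on_subset[OF assms(2)]) auto
    moreover have "Q ` (S \<inter> (\<lambda>x. F (Q x)) -` B) = Q ` S \<inter> F -` B"
      by auto
    ultimately show ?thesis
      by (simp add: compact_imp_closed)
  qed
  moreover have "closed (Q ` S)"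
    using assms(1,2) by (intro compact_imp_closed compact_continuous_image)
  ultimately show ?thesis
    by (simp add: continuous_on_closed_vimage Int_commute)
qed

lemma cis_2pi_eq_imp_diff_Ints:
  assumes "cis (2 * pi * a) = cis (2 * pi * b)"
  shows "a - b \<in> \<int>"
proof -
  from assms obtain n :: int where "\<i> * complex_of_real (2 * pi * a) = \<i> * complex_of_real (2 * pi * b) + (of_int (2 * n) * pi) * \<i>"
    unfolding cis_conv_exp exp_eq by blast
  then have "pi * (2 * a) = pi * (2 * (b + n))"
    by (simp add: complex_eq_iff algebra_simps)
  then have "a - b = of_int n"
    by simp
  then show ?thesis
    by (metis Ints_of_int)
qed

lemma cis_2pi_frac: "cis (2 * pi * frac x) = cis (2 * pi * x)"
proof -
  have "cis (2 * pi * frac x) = cis (2 * pi * x) * cis (2 * pi * (- of_int \<lfloor>x\<rfloor>))"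
    by (simp add: cis_mult frac_def algebra_simps)
  also have "cis (2 * pi * (- of_int \<lfloor>x\<rfloor>)) = 1"
    by (rule cis_multiple_2pi) simp
  finally show ?thesis
    by simp
qed

text \<open>Real polynomials on the image of \<open>torus_embedding\<close> become trigonometric polynomials in
  \<open>y\<close>, and a periodic function factors continuously through it.\<close>

definition torus_embedding :: "'s \<Rightarrow> real^3 \<Rightarrow> 's \<times> complex \<times> complex \<times> complex" where
  "torus_embedding s y = (s, cis (2 * pi * (y $ 1)), cis (2 * pi * (y $ 2)), cis (2 * pi * (y $ 3)))"

lemma continuous_on_torus_embedding: "continuous_on S (\<lambda>x. torus_embedding (fst x) (snd x))"
  unfolding torus_embedding_def by (intro continuous_intros)

lemma torus_embedding_eq_imp_Ints:
  assumes "torus_embedding s y' = torus_embedding s y"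
  shows "\<forall>i. (y' - y) $ i \<in> \<int>"
proof
  fix i :: 3
  have "cis (2 * pi * (y' $ i)) = cis (2 * pi * (y $ i))"
    using assms exhaust_3[of i] by (auto simp: torus_embedding_def)
  then show "(y' - y) $ i \<in> \<int>"
    by (simp add: cis_2pi_eq_imp_diff_Ints)
qed

lemma torus_embedding_unit_cube: "\<exists>y0 \<in> cbox 0 One. torus_embedding s y0 = torus_embedding s y"
proof
  show "(\<chi> i. frac (y $ i)) \<in> cbox 0 (One :: real^3)"
    unfolding mem_box_cart using frac_lt_1 frac_ge_0 by (auto intro: less_imp_le)
  show "torus_embedding s (\<chi> i. frac (y $ i)) = torus_embedding s y"
    by (simp add: torus_embedding_def cis_2pi_frac)
qed

definition coordinate_trig_poly :: "3 \<Rightarrow> real \<Rightarrow> real \<Rightarrow> ('s, 3) trig_poly" where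
  "coordinate_trig_poly j \<alpha> \<beta> = [(\<lambda>s. (\<alpha> - \<i> * \<beta>) / 2, axis j 1), (\<lambda>s. (\<alpha> + \<i> * \<beta>) / 2, - axis j 1)]"

lemma trig_eval_coordinate_trig_poly:
  "trig_eval (coordinate_trig_poly j \<alpha> \<beta>) s y
    = complex_of_real (\<alpha> * Re (cis (2 * pi * (y $ j))) + \<beta> * Im (cis (2 * pi * (y $ j))))"
  by (simp add: coordinate_trig_poly_def torus_char_def inner_axis' complex_eq_iff algebra_simps)
    (simp add: field_simps)

lemma trig_poly_on_coordinate_trig_poly: "trig_poly_on D (coordinate_trig_poly j \<alpha> \<beta>)"
  by (simp add: coordinate_trig_poly_def axis_nth_if)

lemma real_polynomial_function_torus_embedding:
  fixes D :: "'s::real_normed_vector set"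
  assumes "real_polynomial_function p"
  shows "\<exists>xs. trig_poly_on D xs \<and> (\<forall>s y. complex_of_real (p (torus_embedding s y)) = trig_eval xs s y)"
  using assms
proof (induction p rule: real_polynomial_function.induct)
  case (linear p)
  then have lin: "linear p"
    by (rule bounded_linear.linear)
  define \<alpha> where "\<alpha> j = p (0, if j = (1::3) then 1 else 0, if j = 2 then 1 else 0, if j = 3 then 1 else 0)" for j
  define \<beta> where "\<beta> j = p (0, if j = (1::3) then \<i> else 0, if j = 2 then \<i> else 0, if j = 3 then \<i> else 0)" for j
  define xs :: "('s, 3) trig_poly" where "xs = [(\<lambda>s. complex_of_real (p (s, 0)), 0)]
    @ coordinate_trig_poly 1 (\<alpha> 1) (\<beta> 1) @ coordinate_trig_poly 2 (\<alpha> 2) (\<beta> 2) @ coordinate_trig_poly 3 (\<alpha> 3) (\<beta> 3)"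
  have "continuous_on D (\<lambda>s. complex_of_real (p (s, 0)))"
    by (intro continuous_intros bounded_linear.continuous_on[OF linear])
  then have "trig_poly_on D xs"
    by (simp add: xs_def trig_poly_on_coordinate_trig_poly)
  moreover have "complex_of_real (p (torus_embedding s y)) = trig_eval xs s y" for s y
  proof -
    define z where "z j = cis (2 * pi * (y $ j))" for j
    have e: "torus_embedding s y = (s, 0) + Re (z 1) *\<^sub>R (0, 1, 0, 0) + Im (z 1) *\<^sub>R (0, \<i>, 0, 0)
        + Re (z 2) *\<^sub>R (0, 0, 1, 0) + Im (z 2) *\<^sub>R (0, 0, \<i>, 0)
        + Re (z 3) *\<^sub>R (0, 0, 0, 1) + Im (z 3) *\<^sub>R (0, 0, 0, \<i>)"
      by (simp add: torus_embedding_def z_def complex_eq_iff)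
    then have "p (torus_embedding s y) = p (s, 0) + (\<alpha> 1 * Re (z 1) + \<beta> 1 * Im (z 1))
        + (\<alpha> 2 * Re (z 2) + \<beta> 2 * Im (z 2)) + (\<alpha> 3 * Re (z 3) + \<beta> 3 * Im (z 3))"
      unfolding e linear_add[OF lin] linear_scale[OF lin] by (simp add: \<alpha>_def \<beta>_def)
    then show ?thesis
      by (simp add: xs_def trig_eval_coordinate_trig_poly z_def)
  qed
  ultimately show ?case
    by blast
next
  case (const c)
  show ?case
    by (rule exI[of _ "[(\<lambda>s. complex_of_real c, 0)]"]) simp
next
  case (add f g)
  then obtain xs ys where "trig_poly_on D xs" "\<forall>s y. complex_of_real (f (torus_embedding s y)) = trig_eval xs s y"
    "trig_poly_on D ys" "\<forall>s y. complex_of_real (g (torus_embedding s y)) = trig_eval ys s y"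
    by blast
  then show ?case
    by (intro exI[of _ "xs @ ys"]) simp
next
  case (mult f g)
  then obtain xs ys where "trig_poly_on D xs" "\<forall>s y. complex_of_real (f (torus_embedding s y)) = trig_eval xs s y"
    "trig_poly_on D ys" "\<forall>s y. complex_of_real (g (torus_embedding s y)) = trig_eval ys s y"
    by blast
  then show ?case
    by (intro exI[of _ "trig_mult xs ys"]) (simp add: trig_poly_on_mult trig_eval_mult)
qed

lemma periodic_function_trig_approx:
  fixes \<psi> :: "'s::euclidean_space \<Rightarrow> real^3 \<Rightarrow> real"
  assumes "compact D" and cont: "continuous_on (D \<times> UNIV) (\<lambda>(s, y). \<psi> s y)"
    and periodic: "\<And>s y m. s \<in> D \<Longrightarrow> (\<forall>i. m $ i \<in> \<int>) \<Longrightarrow> \<psi> s (y + m) = \<psi> s y"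
    and "\<eta> > 0"
  obtains xs where "trig_poly_on D xs"
    and "\<And>s y. s \<in> D \<Longrightarrow> norm (complex_of_real (\<psi> s y) - trig_eval xs s y) < \<eta>"
proof -
  define C :: "(real^3) set" where "C = cbox 0 One"
  define E where "E x = torus_embedding (fst x) (snd x)" for x :: "'s \<times> (real^3)"
  define F where "F z = \<psi> (fst z) (SOME y. torus_embedding (fst z) y = z)" for z
  have F_torus_embedding: "F (torus_embedding s y) = \<psi> s y" if "s \<in> D" for s y
  proof -
    define y' where "y' = (SOME y'. torus_embedding s y' = torus_embedding s y)"
    have "torus_embedding s y' = torus_embedding s y"
      unfolding y'_def by (rule someI[of _ y]) simp
    then have "\<psi> s (y + (y' - y)) = \<psi> s y"
      by (intro periodic[OF that] torus_embedding_eq_imp_Ints)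
    then show ?thesis
      by (simp add: F_def y'_def torus_embedding_def)
  qed
  have "compact (D \<times> C)"
    using \<open>compact D\<close> by (simp add: C_def compact_Times)
  have "continuous_on (D \<times> C) E"
    unfolding E_def by (rule continuous_on_torus_embedding)
  moreover have "continuous_on (D \<times> C) (\<lambda>x. F (E x))"
  proof (rule continuous_on_eq)
    show "continuous_on (D \<times> C) (\<lambda>(s, y). \<psi> s y)"
      by (rule continuous_on_subset[OF cont]) auto
    show "(\<lambda>(s, y). \<psi> s y) x = F (E x)" if "x \<in> D \<times> C" for x
      using that by (auto simp: E_def F_torus_embedding)
  qed
  ultimately have "continuous_on (E ` (D \<times> C)) F"
    by (rule continuous_on_compact_quotient[OF \<open>compact (D \<times> C)\<close>])
  moreover have "compact (E ` (D \<times> C))"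
    by (rule compact_continuous_image[OF \<open>continuous_on (D \<times> C) E\<close> \<open>compact (D \<times> C)\<close>])
  ultimately obtain g where "polynomial_function g"
    and g: "\<forall>z\<in>E ` (D \<times> C). norm (F z - g z) < \<eta>"
    using Stone_Weierstrass_polynomial_function \<open>\<eta> > 0\<close> by metis
  then have "real_polynomial_function g"
    by (simp add: real_polynomial_function_eq)
  then obtain xs where xs: "trig_poly_on D xs"
    and xs_eq: "\<And>s y. complex_of_real (g (torus_embedding s y)) = trig_eval xs s y"
    using real_polynomial_function_torus_embedding[of g D] by blast
  show ?thesis
  proof (rule that[OF xs])
    fix s y assume "s \<in> D"
    obtain y0 where "y0 \<in> C" "torus_embedding s y0 = torus_embedding s y"
      using torus_embedding_unit_cube[of s y] unfolding C_def by blast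
    then have "torus_embedding s y \<in> E ` (D \<times> C)"
      using \<open>s \<in> D\<close> by (auto simp: E_def intro!: image_eqI[of _ _ "(s, y0)"])
    then have "\<bar>\<psi> s y - g (torus_embedding s y)\<bar> < \<eta>"
      using bspec[OF g \<open>torus_embedding s y \<in> E ` (D \<times> C)\<close>] F_torus_embedding[OF \<open>s \<in> D\<close>, of y]
      by simp
    then show "norm (complex_of_real (\<psi> s y) - trig_eval xs s y) < \<eta>"
      by (simp flip: xs_eq of_real_diff)
  qed
qed

section \<open>Averages along the curve\<close>

lemma integral_cbox_Pair_eq_iterated:
  fixes f :: "real \<times> real \<Rightarrow> 'a::banach"
  assumes "continuous_on (cbox (a1, a2) (b1, b2)) f"
  shows "integral (cbox (a1, a2) (b1, b2)) f = integral {a2..b2} (\<lambda>t. integral {a1..b1} (\<lambda>x. f (x, t)))"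
proof -
  have "continuous_on (cbox (a1, a2) (b1, b2)) (\<lambda>(x, t). f (x, t))"
    using assms by simp
  then show ?thesis
    using integral_prod_continuous[OF assms] integral_swap_continuous[of a1 a2 b1 b2 "\<lambda>x t. f (x, t)"]
    by simp
qed

lemma continuous_on_cbox_Pair_snd:
  fixes Y :: "real \<Rightarrow> 'a::topological_space"
  assumes "continuous_on {a2..b2} Y"
  shows "continuous_on (cbox (a1, a2) (b1, b2)) (\<lambda>s. Y (snd s))"
  by (rule continuous_on_compose2[OF assms]) (auto intro!: continuous_intros simp: cbox_Pair_eq)

lemma integral_torus_char_along_curve_tendsto_zero:
  fixes Y Y' :: "real \<Rightarrow> real^'n::finite" and c :: "real \<times> real \<Rightarrow> complex"
  assumes Y_deriv: "\<And>t. t \<in> {a2..b2} \<Longrightarrow> (Y has_vector_derivative Y' t) (at t within {a2..b2})"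
    and Y'_cont: "continuous_on {a2..b2} Y'"
    and thin: "thin_sublevel_sets {a2..b2} (\<lambda>t. m \<bullet> Y' t)"
    and c_cont: "continuous_on (cbox (a1, a2) (b1, b2)) c"
  shows "((\<lambda>\<epsilon>. integral (cbox (a1, a2) (b1, b2)) (\<lambda>s. c s * torus_char m ((1 / \<epsilon>) *\<^sub>R Y (snd s))))
          \<longlongrightarrow> 0) (at_right 0)"
proof (cases "a1 \<le> b1 \<and> a2 < b2")
  case False
  have "measure lborel (cbox (a1, a2) (b1, b2)) = 0"
    using False by (auto simp: content_Pair)
  then show ?thesis
    by simp
next
  case True
  define \<phi> where "\<phi> t = 2 * pi * (m \<bullet> Y t)" for t
  define G where "G t = integral {a1..b1} (\<lambda>x. c (x, t))" for t
  have "continuous_on {a2..b2} Y"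
    using Y_deriv by (rule continuous_on_vector_derivative)
  have \<phi>_deriv: "(\<phi> has_real_derivative 2 * pi * (m \<bullet> Y' t)) (at t within {a2..b2})" if "t \<in> {a2..b2}" for t
    using Y_deriv[OF that] unfolding \<phi>_def has_vector_derivative_def has_field_derivative_def
    by (auto intro!: derivative_eq_intros simp: algebra_simps)
  have "continuous_on ({a2..b2} \<times> cbox a1 b1) (\<lambda>z. c (snd z, fst z))"
    by (rule continuous_on_compose2[OF c_cont]) (auto intro!: continuous_intros simp: cbox_Pair_eq)
  then have "continuous_on ({a2..b2} \<times> cbox a1 b1) (\<lambda>(t, x). c (x, t))"
    by (simp add: split_beta')
  then have "continuous_on {a2..b2} G"
    unfolding G_def cbox_interval[symmetric] by (rule integral_continuous_on_param)
  have "((\<lambda>\<epsilon>. integral {a2..b2} (\<lambda>t. G t * cis (\<phi> t / \<epsilon>))) \<longlongrightarrow> 0) (at_right 0)"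
  proof (rule oscillatory_integral_tendsto_zero)
    show "continuous_on {a2..b2} (\<lambda>t. 2 * pi * (m \<bullet> Y' t))"
      by (intro continuous_intros Y'_cont)
    show "thin_sublevel_sets {a2..b2} (\<lambda>t. 2 * pi * (m \<bullet> Y' t))"
      using thin_sublevel_sets_cmult[OF thin, of "2 * pi"] by simp
  qed (use True \<open>continuous_on {a2..b2} G\<close> \<phi>_deriv in auto)
  moreover have "integral (cbox (a1, a2) (b1, b2)) (\<lambda>s. c s * torus_char m ((1 / \<epsilon>) *\<^sub>R Y (snd s)))
      = integral {a2..b2} (\<lambda>t. G t * cis (\<phi> t / \<epsilon>))" for \<epsilon>
  proof -
    have "continuous_on (cbox (a1, a2) (b1, b2)) (\<lambda>s. c s * torus_char m ((1 / \<epsilon>) *\<^sub>R Y (snd s)))"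
      using continuous_on_cbox_Pair_snd[OF \<open>continuous_on {a2..b2} Y\<close>] by (intro continuous_intros c_cont)
    then have "integral (cbox (a1, a2) (b1, b2)) (\<lambda>s. c s * torus_char m ((1 / \<epsilon>) *\<^sub>R Y (snd s)))
        = integral {a2..b2} (\<lambda>t. integral {a1..b1} (\<lambda>x. c (x, t)) * torus_char m ((1 / \<epsilon>) *\<^sub>R Y t))"
      by (simp add: integral_cbox_Pair_eq_iterated)
    also have "\<dots> = integral {a2..b2} (\<lambda>t. G t * cis (\<phi> t / \<epsilon>))"
      by (simp add: G_def \<phi>_def torus_char_def)
    finally show ?thesis .
  qed
  ultimately show ?thesis
    by simp
qed

lemma integral_trig_eval_along_curve_tendsto:
  fixes a1 a2 b1 b2 :: real and Y Y' :: "real \<Rightarrow> real^'n::finite"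
  assumes Y_deriv: "\<And>t. t \<in> {a2..b2} \<Longrightarrow> (Y has_vector_derivative Y' t) (at t within {a2..b2})"
    and Y'_cont: "continuous_on {a2..b2} Y'"
    and thin: "\<And>m. (\<forall>i. m $ i \<in> \<int>) \<Longrightarrow> m \<noteq> 0 \<Longrightarrow> thin_sublevel_sets {a2..b2} (\<lambda>t. m \<bullet> Y' t)"
    and xs: "trig_poly_on (cbox (a1, a2) (b1, b2)) xs"
  shows "((\<lambda>\<epsilon>. integral (cbox (a1, a2) (b1, b2)) (\<lambda>s. trig_eval xs s ((1 / \<epsilon>) *\<^sub>R Y (snd s))))
          \<longlongrightarrow> integral (cbox (a1, a2) (b1, b2)) (trig_mean xs)) (at_right 0)"
  using xs
proof (induction xs)
  case (Cons p xs)
  define D where "D = cbox (a1, a2) (b1, b2)"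
  define Y\<epsilon> where "Y\<epsilon> \<epsilon> s = (1 / \<epsilon>) *\<^sub>R Y (snd s)" for \<epsilon> and s :: "real \<times> real"
  have "continuous_on {a2..b2} Y"
    using Y_deriv by (rule continuous_on_vector_derivative)
  then have "continuous_on D (\<lambda>s. Y (snd s))"
    unfolding D_def by (rule continuous_on_cbox_Pair_snd)
  then have Y\<epsilon>_cont: "continuous_on D (Y\<epsilon> \<epsilon>)" for \<epsilon>
    unfolding Y\<epsilon>_def by (intro continuous_intros)
  have p: "continuous_on D (fst p)" "\<forall>i. snd p $ i \<in> \<int>" and "trig_poly_on D xs"
    using Cons.prems by (auto simp: D_def)
  have int_head: "(\<lambda>s. fst p s * torus_char (snd p) (Y\<epsilon> \<epsilon> s)) integrable_on D" for \<epsilon>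
    unfolding D_def using p(1) Y\<epsilon>_cont unfolding D_def
    by (intro integrable_continuous continuous_intros)
  have int_tail: "(\<lambda>s. trig_eval xs s (Y\<epsilon> \<epsilon> s)) integrable_on D" for \<epsilon>
    unfolding D_def using continuous_on_trig_eval[OF \<open>trig_poly_on D xs\<close> Y\<epsilon>_cont] unfolding D_def
    by (rule integrable_continuous)
  have eval: "integral D (\<lambda>s. trig_eval (p # xs) s (Y\<epsilon> \<epsilon> s))
      = integral D (\<lambda>s. fst p s * torus_char (snd p) (Y\<epsilon> \<epsilon> s)) + integral D (\<lambda>s. trig_eval xs s (Y\<epsilon> \<epsilon> s))"
    for \<epsilon>
    using integral_add[OF int_head int_tail] by simp
  have mean: "integral D (trig_mean (p # xs))
      = (if snd p = 0 then integral D (fst p) else 0) + integral D (trig_mean xs)"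
  proof -
    have "trig_mean (p # xs) = (\<lambda>s. (if snd p = 0 then fst p s else 0) + trig_mean xs s)"
      by (simp add: fun_eq_iff)
    moreover have "trig_mean xs integrable_on D" "fst p integrable_on D"
      using continuous_on_trig_mean[OF \<open>trig_poly_on D xs\<close>] p(1) unfolding D_def
      by (auto intro: integrable_continuous)
    ultimately show ?thesis
      by (cases "snd p = 0") (simp_all add: integral_add)
  qed
  have "((\<lambda>\<epsilon>. integral D (\<lambda>s. fst p s * torus_char (snd p) (Y\<epsilon> \<epsilon> s)))
      \<longlongrightarrow> (if snd p = 0 then integral D (fst p) else 0)) (at_right 0)"
  proof (cases "snd p = 0")
    case False
    then show ?thesis
      using integral_torus_char_along_curve_tendsto_zero[OF Y_deriv Y'_cont thin[OF p(2) False] p(1)[unfolded D_def]]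
      by (simp add: D_def Y\<epsilon>_def)
  qed simp
  moreover have "((\<lambda>\<epsilon>. integral D (\<lambda>s. trig_eval xs s (Y\<epsilon> \<epsilon> s))) \<longlongrightarrow> integral D (trig_mean xs)) (at_right 0)"
    using Cons.IH \<open>trig_poly_on D xs\<close> by (simp add: D_def Y\<epsilon>_def)
  ultimately show ?case
    unfolding D_def[symmetric] Y\<epsilon>_def[symmetric] eval mean by (rule tendsto_add)
qed simp

lemma tendsto_uniform_approximation:
  fixes f :: "'a \<Rightarrow> 'b::metric_space"
  assumes "\<And>e. e > 0 \<Longrightarrow> \<exists>g L. (g \<longlongrightarrow> L) F \<and> (\<forall>x. dist (f x) (g x) \<le> e * C) \<and> dist l L \<le> e * C"
  shows "(f \<longlongrightarrow> l) F"
proof (rule tendstoI)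
  fix \<eta> :: real
  assume "\<eta> > 0"
  define e where "e = \<eta> / (3 * (\<bar>C\<bar> + 1))"
  have "e > 0" "e * C < \<eta> / 3"
    using \<open>\<eta> > 0\<close> by (auto simp: e_def field_simps abs_if)
  obtain g L where lim: "(g \<longlongrightarrow> L) F"
    and approx: "\<forall>x. dist (f x) (g x) \<le> e * C" "dist l L \<le> e * C"
    using assms[OF \<open>e > 0\<close>] by blast
  have "\<forall>\<^sub>F x in F. dist (g x) L < \<eta> / 3"
    using \<open>\<eta> > 0\<close> by (intro tendstoD[OF lim]) simp
  then show "\<forall>\<^sub>F x in F. dist (f x) l < \<eta>"
  proof (rule eventually_mono)
    fix x
    assume "dist (g x) L < \<eta> / 3"
    moreover have "dist (f x) l \<le> dist (f x) (g x) + (dist (g x) L + dist L l)"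
      using dist_triangle[of "f x" l "g x"] dist_triangle[of "g x" l L] by linarith
    ultimately show "dist (f x) l < \<eta>"
      using approx(1)[rule_format, of x] approx(2) \<open>e * C < \<eta> / 3\<close> by (simp add: dist_commute)
  qed
qed

lemma norm_of_real_integral_diff_le:
  fixes f :: "'a::euclidean_space \<Rightarrow> real" and g :: "'a \<Rightarrow> complex"
  assumes "continuous_on (cbox a b) f" "continuous_on (cbox a b) g"
    and "\<And>x. x \<in> cbox a b \<Longrightarrow> norm (complex_of_real (f x) - g x) \<le> e"
  shows "norm (complex_of_real (integral (cbox a b) f) - integral (cbox a b) g) \<le> e * measure lborel (cbox a b)"
proof (cases "cbox a b = {}")
  case False
  then have "0 \<le> e"
    using assms(3) by (auto intro: order_trans[OF norm_ge_zero])
  have "f integrable_on cbox a b" "g integrable_on cbox a b"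
    using assms(1,2) by (auto intro: integrable_continuous)
  then have "complex_of_real (integral (cbox a b) f) - integral (cbox a b) g
      = integral (cbox a b) (\<lambda>x. complex_of_real (f x) - g x)"
    by (simp add: integral_diff integrable_linear[OF _ bounded_linear_of_real, unfolded o_def]
        flip: integral_linear[OF _ bounded_linear_of_real, unfolded o_def])
  also have "norm \<dots> \<le> e * measure lborel (cbox a b)"
    using assms \<open>0 \<le> e\<close> by (intro integrable_bound) (auto intro!: integrable_continuous continuous_intros)
  finally show ?thesis .
qed simp

lemma norm_integral_trig_approx_along_le:
  fixes \<psi> :: "'s::euclidean_space \<Rightarrow> real^'n::finite \<Rightarrow> real"
  assumes cont: "continuous_on (cbox a b \<times> UNIV) (\<lambda>(s, y). \<psi> s y)" and "continuous_on (cbox a b) g"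
    and "trig_poly_on (cbox a b) xs"
    and close: "\<And>s y. s \<in> cbox a b \<Longrightarrow> norm (complex_of_real (\<psi> s y) - trig_eval xs s y) \<le> \<eta>"
  shows "norm (complex_of_real (integral (cbox a b) (\<lambda>s. \<psi> s (g s))) - integral (cbox a b) (\<lambda>s. trig_eval xs s (g s)))
    \<le> \<eta> * measure lborel (cbox a b)"
  using assms by (intro norm_of_real_integral_diff_le continuous_on_trig_eval continuous_on_compose_Pair[OF cont])
    auto

lemma norm_integral_trig_approx_cube_mean_le:
  fixes \<psi> :: "'s::euclidean_space \<Rightarrow> real^'n::finite \<Rightarrow> real"
  assumes cont: "continuous_on (cbox a b \<times> UNIV) (\<lambda>(s, y). \<psi> s y)"
    and xs: "trig_poly_on (cbox a b) xs"
    and close: "\<And>s y. s \<in> cbox a b \<Longrightarrow> norm (complex_of_real (\<psi> s y) - trig_eval xs s y) \<le> \<eta>"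
  shows "norm (complex_of_real (integral (cbox a b) (\<lambda>s. integral (cbox 0 One) (\<psi> s)))
      - integral (cbox a b) (trig_mean xs)) \<le> \<eta> * measure lborel (cbox a b)"
proof (rule norm_of_real_integral_diff_le)
  show "continuous_on (cbox a b) (\<lambda>s. integral (cbox 0 One) (\<psi> s))"
    by (rule integral_continuous_on_param, rule continuous_on_subset[OF cont]) auto
  show "continuous_on (cbox a b) (trig_mean xs)"
    using xs by (rule continuous_on_trig_mean)
  fix s assume "s \<in> cbox a b"
  have "continuous_on (cbox 0 One) (\<psi> s)"
    using \<open>s \<in> cbox a b\<close> by (intro continuous_on_compose_Pair[OF cont]) (auto intro: continuous_intros)
  then have "norm (complex_of_real (integral (cbox 0 One) (\<psi> s)) - integral (cbox 0 One) (trig_eval xs s))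
      \<le> \<eta> * measure lborel (cbox 0 (One :: real^'n))"
    using close[OF \<open>s \<in> cbox a b\<close>] by (intro norm_of_real_integral_diff_le continuous_on_trig_eval_right) auto
  moreover have "integral (cbox 0 One) (trig_eval xs s) = trig_mean xs s"
    using xs by (intro integral_unit_cube_trig_eval) (auto simp: trig_poly_on_def)
  ultimately show "norm (complex_of_real (integral (cbox 0 One) (\<psi> s)) - trig_mean xs s) \<le> \<eta>"
    by simp
qed

theorem lemma6:
  fixes a1 b1 a2 b2 :: real
    and \<psi> :: "real \<times> real \<Rightarrow> real^3 \<Rightarrow> real"
    and Y Y' :: "real \<Rightarrow> real^3"
  assumes cont: "continuous_on ((cbox (a1, a2) (b1, b2)) \<times> UNIV) (\<lambda>(s, y). \<psi> s y)"
    and periodic: "\<And>s y m. s \<in> cbox (a1, a2) (b1, b2) \<Longrightarrow> (\<forall>i. m $ i \<in> \<int>) \<Longrightarrow>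
                      \<psi> s (y + m) = \<psi> s y"
    and Y_deriv: "\<And>t. t \<in> {a2..b2} \<Longrightarrow> (Y has_vector_derivative Y' t) (at t within {a2..b2})"
    and Y'_cont: "continuous_on {a2..b2} Y'"
    and nonres: "\<And>m::real^3. (\<forall>i. m $ i \<in> \<int>) \<Longrightarrow> m \<noteq> 0 \<Longrightarrow>
      (\<exists>\<delta>0>0. \<exists>N :: real \<Rightarrow> nat. \<exists>c d :: real \<Rightarrow> nat \<Rightarrow> real.
         (\<forall>\<delta>\<in>{0<..<\<delta>0}.
            (\<forall>i<N \<delta>. c \<delta> i \<le> d \<delta> i) \<and>
            {s2 \<in> {a2..b2}. \<bar>m \<bullet> Y' s2\<bar> \<le> \<delta>} \<subseteq> (\<Union>i<N \<delta>. {c \<delta> i..d \<delta> i})) \<and>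
         ((\<lambda>\<delta>. \<Sum>i<N \<delta>. d \<delta> i - c \<delta> i) \<longlongrightarrow> 0) (at_right 0))"
  shows "((\<lambda>\<epsilon>. integral (cbox (a1, a2) (b1, b2)) (\<lambda>s. \<psi> s ((1 / \<epsilon>) *\<^sub>R Y (snd s))))
          \<longlongrightarrow> integral (cbox (a1, a2) (b1, b2)) (\<lambda>s. integral (cbox 0 One) (\<lambda>y. \<psi> s y)))
         (at_right 0)"
proof -
  define D where "D = cbox (a1, a2) (b1, b2)"
  have thin: "\<And>m. (\<forall>i. m $ i \<in> \<int>) \<Longrightarrow> m \<noteq> 0 \<Longrightarrow> thin_sublevel_sets {a2..b2} (\<lambda>t. m \<bullet> Y' t)"
    unfolding thin_sublevel_sets_def by (rule nonres)
  have Y_cont: "continuous_on D (\<lambda>s. (1 / \<epsilon>) *\<^sub>R Y (snd s))" for \<epsilon>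
    using continuous_on_cbox_Pair_snd[OF continuous_on_vector_derivative[OF Y_deriv]]
    unfolding D_def by (intro continuous_intros)
  have "((\<lambda>\<epsilon>. complex_of_real (integral D (\<lambda>s. \<psi> s ((1 / \<epsilon>) *\<^sub>R Y (snd s)))))
      \<longlongrightarrow> complex_of_real (integral D (\<lambda>s. integral (cbox 0 One) (\<psi> s)))) (at_right 0)"
  proof (rule tendsto_uniform_approximation[where C = "measure lborel D"])
    fix \<eta> :: real
    assume "\<eta> > 0"
    then obtain xs where xs: "trig_poly_on D xs"
      and close: "\<And>s y. s \<in> D \<Longrightarrow> norm (complex_of_real (\<psi> s y) - trig_eval xs s y) < \<eta>"
      using periodic_function_trig_approx[OF _ cont periodic] unfolding D_def by auto
    then have close_le: "\<And>s y. s \<in> cbox (a1, a2) (b1, b2) \<Longrightarrow> norm (complex_of_real (\<psi> s y) - trig_eval xs s y) \<le> \<eta>"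
      unfolding D_def by (auto intro: less_imp_le)
    have "((\<lambda>\<epsilon>. integral D (\<lambda>s. trig_eval xs s ((1 / \<epsilon>) *\<^sub>R Y (snd s)))) \<longlongrightarrow> integral D (trig_mean xs))
        (at_right 0)"
      unfolding D_def by (rule integral_trig_eval_along_curve_tendsto[OF Y_deriv Y'_cont thin xs[unfolded D_def]])
    moreover have "dist (complex_of_real (integral D (\<lambda>s. \<psi> s ((1 / \<epsilon>) *\<^sub>R Y (snd s)))))
        (integral D (\<lambda>s. trig_eval xs s ((1 / \<epsilon>) *\<^sub>R Y (snd s)))) \<le> \<eta> * measure lborel D" for \<epsilon>
      unfolding D_def dist_norm
      by (rule norm_integral_trig_approx_along_le[OF cont Y_cont[unfolded D_def] xs[unfolded D_def] close_le])
    moreover have "dist (complex_of_real (integral D (\<lambda>s. integral (cbox 0 One) (\<psi> s)))) (integral D (trig_mean xs))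
        \<le> \<eta> * measure lborel D"
      unfolding D_def dist_norm
      by (rule norm_integral_trig_approx_cube_mean_le[OF cont xs[unfolded D_def] close_le])
    ultimately show "\<exists>g L. (g \<longlongrightarrow> L) (at_right 0)
        \<and> (\<forall>\<epsilon>. dist (complex_of_real (integral D (\<lambda>s. \<psi> s ((1 / \<epsilon>) *\<^sub>R Y (snd s))))) (g \<epsilon>)
              \<le> \<eta> * measure lborel D)
        \<and> dist (complex_of_real (integral D (\<lambda>s. integral (cbox 0 One) (\<psi> s)))) L \<le> \<eta> * measure lborel D"
      by blast
  qed
  then show ?thesis
    unfolding D_def by (rule tendsto_of_real_iff[THEN iffD1])
qed

end
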